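(* For each $t\in[0,1)$ the operator $C_t\colon H^\infty\to H^\infty$ is continuous. Moreover, $\|C_0\|_{H^\infty\to H^\infty}=1$ and $\|C_t\|_{H^\infty\to H^\infty}=-\frac{\log(1-t)}{t}$ for every $t\in(0,1)$.
   Context: $\mathbb{D}=\{z\in\mathbb{C}:|z|<1\}$; $H^\infty$ is the Banach space of bounded holomorphic functions on $\mathbb{D}$ with norm $\|f\|_\infty=\sup_{z\in\mathbb{D}}|f(z)|$. For $t\in[0,1]$ the generalized Cesàro operator $C_t$ is defined on holomorphic $f$ on $\mathbb{D}$ by $C_tf(0)=f(0)$ and $C_tf(z)=\frac{1}{z}\int_0^z\frac{f(\xi)}{1-t\xi}\,d\xi$ for $z\in\mathbb{D}\setminus\{0\}$. *)

theory Defs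
  imports "HOL-Complex_Analysis.Complex_Analysis"
begin

abbreviation unit_disc :: "complex set" where
  "unit_disc \<equiv> ball 0 1"

text \<open>H-infinity: bounded holomorphic functions on the unit disc
  (values outside the disc are irrelevant).\<close>
definition Hinf :: "(complex \<Rightarrow> complex) set" where
  "Hinf = {f. f holomorphic_on unit_disc \<and> bounded (f ` unit_disc)}"

definition hnorm :: "(complex \<Rightarrow> complex) \<Rightarrow> real" where
  "hnorm f = (SUP z\<in>unit_disc. norm (f z))"

definition cesaro :: "real \<Rightarrow> (complex \<Rightarrow> complex) \<Rightarrow> (complex \<Rightarrow> complex)" where
  "cesaro t f z = (if z = 0 then f 0
     else (1 / z) * contour_integral (linepath 0 z) (\<lambda>\<xi>. f \<xi> / (1 - complex_of_real t * \<xi>)))"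

definition cesaro_opnorm :: "real \<Rightarrow> real" where
  "cesaro_opnorm t = (SUP f\<in>{f\<in>Hinf. hnorm f \<le> 1}. hnorm (cesaro t f))"

end

theory Submission imports Defs begin

text \<open>Substituting \<open>\<xi> = s z\<close> gives \<open>C\<^sub>t f(z) = \<integral>\<^sub>0\<^sup>1 f(sz) / (1 - tsz) ds\<close>, and since
  \<open>|1 - tsz| \<ge> 1 - ts\<close> this yields \<open>\<parallel>C\<^sub>t f\<parallel>\<^sub>\<infinity> \<le> \<parallel>f\<parallel>\<^sub>\<infinity> \<integral>\<^sub>0\<^sup>1 ds / (1 - ts) = \<parallel>f\<parallel>\<^sub>\<infinity> (-log (1 - t) / t)\<close>;
  linearity turns this bound into continuity.  Holomorphy holds because \<open>z C\<^sub>t f(z)\<close> is a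
  primitive of \<open>f(\<xi>) / (1 - t\<xi>)\<close> vanishing at 0.  The bound is attained in the limit by
  \<open>f = 1\<close>: \<open>C\<^sub>t 1(x) = -log (1 - tx) / (tx)\<close> for real \<open>x\<close>, which tends to the bound as \<open>x \<rightarrow> 1\<close>.\<close>

definition cesaro_const :: "real \<Rightarrow> real" where
  "cesaro_const t = (if t = 0 then 1 else - ln (1 - t) / t)"

lemma has_integral_cesaro_const:
  fixes a :: real
  assumes "a < 1"
  shows "((\<lambda>s. 1 / (1 - a * s)) has_integral cesaro_const a) {0..1}"
proof (cases "a = 0")
  case True
  then show ?thesis
    using has_integral_const_real[of "1::real" 0 1] by (simp add: cesaro_const_def)
next
  case False
  have "((\<lambda>s. 1 / (1 - a * s)) has_integral
         (\<lambda>s. - ln (1 - a * s) / a) 1 - (\<lambda>s. - ln (1 - a * s) / a) 0) {0..1}"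
  proof (rule fundamental_theorem_of_calculus)
    fix x :: real
    assume x: "x \<in> {0..1}"
    have "0 < 1 - a * x"
      using assms x by (smt (verit) atLeastAtMost_iff mult_left_le mult_nonpos_nonneg)
    then have "((\<lambda>s. - ln (1 - a * s) / a) has_real_derivative - (- a / (1 - a * x)) / a)
                 (at x within {0..1})"
      by (auto intro!: derivative_eq_intros)
    then show "((\<lambda>s. - ln (1 - a * s) / a) has_vector_derivative 1 / (1 - a * x))
                 (at x within {0..1})"
      using False by (simp add: has_real_derivative_iff_has_vector_derivative[symmetric])
  qed simp
  then show ?thesis
    using False by (simp add: cesaro_const_def)
qed

lemma cesaro_const_pos:
  assumes "t < 1"
  shows "0 < cesaro_const t"
proof (cases "t = 0")
  case False
  have "ln (1 - t) < 0" if "0 < t"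
    using assms that by simp
  moreover have "0 < ln (1 - t)" if "t < 0"
    using that by simp
  ultimately show ?thesis
    using False by (cases "0 < t") (auto simp: cesaro_const_def divide_pos_neg divide_neg_pos)
qed (simp add: cesaro_const_def)

lemma cesaro_integrand_holomorphic:
  assumes "f holomorphic_on unit_disc" "\<bar>t\<bar> \<le> 1"
  shows "(\<lambda>\<xi>. f \<xi> / (1 - complex_of_real t * \<xi>)) holomorphic_on unit_disc"
proof -
  have "norm (complex_of_real t * \<xi>) < 1" if "\<xi> \<in> unit_disc" for \<xi>
    using assms(2) that mult_right_le_one_le[of "norm \<xi>" "\<bar>t\<bar>"] by (simp add: norm_mult mult.commute)
  then have "1 - complex_of_real t * \<xi> \<noteq> 0" if "\<xi> \<in> unit_disc" for \<xi>
    using that by fastforce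
  then show ?thesis
    using assms(1) by (auto intro!: holomorphic_intros)
qed

lemma contour_integral_linepath_has_field_derivative:
  assumes "f holomorphic_on S" "convex S" "open S" "a \<in> S" "x \<in> S"
  shows "((\<lambda>z. contour_integral (linepath a z) f) has_field_derivative f x) (at x)"
proof -
  have "((\<lambda>z. contour_integral (linepath a z) f) has_field_derivative f x) (at x within S)"
  proof (rule triangle_contour_integrals_convex_primitive)
    show "continuous_on S f"
      using assms(1) by (rule holomorphic_on_imp_continuous_on)
    fix b c
    assume "b \<in> S" "c \<in> S"
    then have "closed_segment a b \<union> closed_segment b c \<union> closed_segment c a \<subseteq> S"
      using assms(2,4) closed_segment_subset by blast
    then have "(f has_contour_integral 0) (linepath a b +++ linepath b c +++ linepath c a)"
      using assms(1,2) by (intro Cauchy_theorem_convex_simple) (simp_all add: path_image_join)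
    then show "contour_integral (linepath a b) f + contour_integral (linepath b c) f +
               contour_integral (linepath c a) f = 0"
      by (rule has_chain_integral_chain_integral3)
  qed (fact assms)+
  then show ?thesis
    by (simp only: at_within_open[OF assms(5,3)])
qed

lemma cesaro_has_integral:
  assumes "f holomorphic_on unit_disc" "\<bar>t\<bar> \<le> 1" "z \<in> unit_disc"
  shows "((\<lambda>s. f (of_real s * z) / (1 - of_real t * (of_real s * z))) has_integral cesaro t f z) {0..1}"
proof (cases "z = 0")
  case True
  then show ?thesis
    using has_integral_const_real[of "f 0" 0 1] by (simp add: cesaro_def)
next
  case False
  let ?g = "\<lambda>\<xi>. f \<xi> / (1 - complex_of_real t * \<xi>)"
  have "path_image (linepath 0 z) \<subseteq> unit_disc"
    using assms(3) by (simp add: closed_segment_subset)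
  then have "?g contour_integrable_on linepath 0 z"
    using cesaro_integrand_holomorphic[OF assms(1,2)]
    by (intro contour_integrable_holomorphic_simple[of _ unit_disc]) auto
  then have "(?g has_contour_integral contour_integral (linepath 0 z) ?g) (linepath 0 z)"
    by (rule has_contour_integral_integral)
  then have "((\<lambda>s. ?g (linepath 0 z s) * z) has_integral contour_integral (linepath 0 z) ?g) {0..1}"
    by (simp add: has_contour_integral_linepath)
  then have "((\<lambda>s. ?g (linepath 0 z s) * z / z) has_integral contour_integral (linepath 0 z) ?g / z) {0..1}"
    by (rule has_integral_divide)
  then show ?thesis
    using False by (simp add: cesaro_def linepath_def scaleR_conv_of_real)
qed

lemma norm_cesaro_le:
  assumes f: "f holomorphic_on unit_disc" "\<And>w. w \<in> unit_disc \<Longrightarrow> norm (f w) \<le> M"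
    and t: "0 \<le> t" "t < 1" and z: "z \<in> unit_disc"
  shows "norm (cesaro t f z) \<le> M * cesaro_const t"
proof -
  let ?h = "\<lambda>s. f (of_real s * z) / (1 - of_real t * (of_real s * z))"
  have I: "(?h has_integral cesaro t f z) {0..1}"
    using t by (intro cesaro_has_integral[OF f(1) _ z]) simp
  have J: "((\<lambda>s. M * (1 / (1 - t * s))) has_integral M * cesaro_const t) {0..1}"
    using has_integral_cesaro_const[OF t(2)] by (rule has_integral_mult_right)
  have M: "0 \<le> M"
    using order_trans[OF norm_ge_zero f(2)[of 0]] by simp
  have "norm (?h s) \<le> M * (1 / (1 - t * s))" if s: "0 \<le> s" "s \<le> 1" for s
  proof -
    have "s * norm z \<le> s" "s * norm z \<le> norm z"
      using s z by (auto intro: mult_left_le mult_left_le_one_le)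
    then have sz: "norm (of_real s * z) < 1" and tsz: "norm (of_real t * (of_real s * z)) \<le> t * s"
      using s t z by (simp_all add: norm_mult mult_left_mono)
    have ts: "0 < 1 - t * s"
      using s t mult_left_le[of s t] by simp
    have "1 - t * s \<le> norm (1 - of_real t * (of_real s * z))"
      using tsz norm_triangle_ineq2[of 1 "of_real t * (of_real s * z)"] by simp
    then have "norm (f (of_real s * z)) / norm (1 - of_real t * (of_real s * z)) \<le> M / (1 - t * s)"
      using M f(2) sz ts by (intro frac_le) simp_all
    then show ?thesis
      by (simp add: norm_divide)
  qed
  then have "norm (integral {0..1} ?h) \<le> integral {0..1} (\<lambda>s. M * (1 / (1 - t * s)))"
    using has_integral_integrable[OF I] has_integral_integrable[OF J]
    by (intro integral_norm_bound_integral) simp_all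
  then show ?thesis
    using integral_unique[OF I] integral_unique[OF J] by simp
qed

lemma cesaro_holomorphic:
  assumes "f holomorphic_on unit_disc" "\<bar>t\<bar> \<le> 1"
  shows "cesaro t f holomorphic_on unit_disc"
proof -
  let ?g = "\<lambda>\<xi>. f \<xi> / (1 - complex_of_real t * \<xi>)"
  let ?F = "\<lambda>z. contour_integral (linepath 0 z) ?g"
  have F': "(?F has_field_derivative ?g z) (at z)" if "z \<in> unit_disc" for z
    using cesaro_integrand_holomorphic[OF assms] that
    by (intro contour_integral_linepath_has_field_derivative) auto
  have F'0: "deriv ?F 0 = f 0"
    using DERIV_imp_deriv[OF F'[of 0]] by simp
  have "?F holomorphic_on unit_disc"
    unfolding holomorphic_on_open[OF open_ball] using F' by blast
  then have "(\<lambda>z. if z = 0 then deriv ?F 0 else (?F z - ?F 0) / (z - 0)) holomorphic_on unit_disc"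
    by (rule pole_lemma_open[OF _ open_ball])
  then show ?thesis
    by (rule holomorphic_transform) (simp add: cesaro_def F'0)
qed

lemma cesaro_diff:
  assumes "f holomorphic_on unit_disc" "g holomorphic_on unit_disc" "\<bar>t\<bar> \<le> 1" "z \<in> unit_disc"
  shows "cesaro t (\<lambda>z. g z - f z) z = cesaro t g z - cesaro t f z"
proof -
  have "(\<lambda>z. g z - f z) holomorphic_on unit_disc"
    using assms(1,2) by (intro holomorphic_intros)
  from cesaro_has_integral[OF this assms(3,4)]
  have "((\<lambda>s. g (of_real s * z) / (1 - of_real t * (of_real s * z)) -
              f (of_real s * z) / (1 - of_real t * (of_real s * z)))
         has_integral cesaro t (\<lambda>z. g z - f z) z) {0..1}"
    by (simp add: diff_divide_distrib)
  moreover have "((\<lambda>s. g (of_real s * z) / (1 - of_real t * (of_real s * z)) -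
                      f (of_real s * z) / (1 - of_real t * (of_real s * z)))
                 has_integral cesaro t g z - cesaro t f z) {0..1}"
    using assms by (intro has_integral_diff cesaro_has_integral)
  ultimately show ?thesis
    by (rule has_integral_unique)
qed

lemma norm_le_hnorm:
  assumes "f \<in> Hinf" "z \<in> unit_disc"
  shows "norm (f z) \<le> hnorm f"
proof -
  have "bounded (f ` unit_disc)"
    using assms(1) by (simp add: Hinf_def)
  then have "bdd_above ((\<lambda>z. norm (f z)) ` unit_disc)"
    by (auto simp: bounded_iff bdd_above_def)
  then show ?thesis
    unfolding hnorm_def using assms(2) by (rule cSUP_upper2) simp
qed

lemma hnorm_le:
  assumes "\<And>z. z \<in> unit_disc \<Longrightarrow> norm (f z) \<le> B"
  shows "hnorm f \<le> B"
  unfolding hnorm_def using assms by (intro cSUP_least) auto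

lemma Hinf_const: "(\<lambda>_. c) \<in> Hinf"
  by (simp add: Hinf_def image_constant_conv)

lemma hnorm_const: "hnorm (\<lambda>_. c) = norm c"
  by (simp add: hnorm_def)

lemma Hinf_diff:
  assumes "f \<in> Hinf" "g \<in> Hinf"
  shows "(\<lambda>z. g z - f z) \<in> Hinf"
  using assms by (auto simp: Hinf_def intro!: holomorphic_intros bounded_minus_comp)

lemma
  assumes "f \<in> Hinf" "0 \<le> t" "t < 1"
  shows cesaro_Hinf: "cesaro t f \<in> Hinf"
    and hnorm_cesaro_le: "hnorm (cesaro t f) \<le> hnorm f * cesaro_const t"
proof -
  have hol: "f holomorphic_on unit_disc"
    using assms(1) by (simp add: Hinf_def)
  have bound: "norm (cesaro t f z) \<le> hnorm f * cesaro_const t" if "z \<in> unit_disc" for z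
    using assms(2,3) that by (intro norm_cesaro_le[OF hol] norm_le_hnorm[OF assms(1)])
  then have "bounded (cesaro t f ` unit_disc)"
    unfolding bounded_iff by blast
  then show "cesaro t f \<in> Hinf"
    using assms(2,3) by (simp add: Hinf_def cesaro_holomorphic hol)
  show "hnorm (cesaro t f) \<le> hnorm f * cesaro_const t"
    using bound by (rule hnorm_le)
qed

lemma hnorm_cesaro_diff_le:
  assumes "f \<in> Hinf" "g \<in> Hinf" "0 \<le> t" "t < 1"
  shows "hnorm (\<lambda>z. cesaro t g z - cesaro t f z) \<le> hnorm (\<lambda>z. g z - f z) * cesaro_const t"
proof -
  have "f holomorphic_on unit_disc" "g holomorphic_on unit_disc"
    using assms(1,2) by (simp_all add: Hinf_def)
  then have "cesaro t g z - cesaro t f z = cesaro t (\<lambda>z. g z - f z) z" if "z \<in> unit_disc" for z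
    using assms(3,4) that by (simp add: cesaro_diff)
  then have "hnorm (\<lambda>z. cesaro t g z - cesaro t f z) = hnorm (cesaro t (\<lambda>z. g z - f z))"
    unfolding hnorm_def by (intro SUP_cong) auto
  also have "\<dots> \<le> hnorm (\<lambda>z. g z - f z) * cesaro_const t"
    using Hinf_diff[OF assms(1,2)] assms(3,4) by (rule hnorm_cesaro_le)
  finally show ?thesis .
qed

lemma cesaro_continuous:
  assumes "f \<in> Hinf" "0 \<le> t" "t < 1" "\<epsilon> > 0"
  shows "\<exists>\<delta>>0. \<forall>g\<in>Hinf. hnorm (\<lambda>z. g z - f z) < \<delta> \<longrightarrow>
               hnorm (\<lambda>z. cesaro t g z - cesaro t f z) < \<epsilon>"
proof (intro exI conjI ballI impI)
  have L: "0 < cesaro_const t"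
    using assms(3) by (rule cesaro_const_pos)
  then show "0 < \<epsilon> / cesaro_const t"
    using assms(4) by simp
  fix g
  assume "g \<in> Hinf" "hnorm (\<lambda>z. g z - f z) < \<epsilon> / cesaro_const t"
  then have "hnorm (\<lambda>z. cesaro t g z - cesaro t f z) < \<epsilon> / cesaro_const t * cesaro_const t"
    using hnorm_cesaro_diff_le[OF assms(1) _ assms(2,3)] L
    by (meson mult_strict_right_mono order.strict_trans1)
  then show "hnorm (\<lambda>z. cesaro t g z - cesaro t f z) < \<epsilon>"
    using L by simp
qed

lemma cesaro_one_of_real:
  assumes "\<bar>t\<bar> \<le> 1" "0 \<le> x" "x < 1"
  shows "cesaro t (\<lambda>_. 1) (of_real x) = of_real (cesaro_const (t * x))"
proof -
  have "\<bar>t * x\<bar> \<le> x"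
    using assms by (simp add: abs_mult mult_left_le_one_le)
  then have "((\<lambda>s. complex_of_real (1 / (1 - t * x * s))) has_integral
               complex_of_real (cesaro_const (t * x))) {0..1}"
    using assms(3) by (intro has_integral_of_real has_integral_cesaro_const) linarith
  then have "((\<lambda>s. 1 / (1 - of_real t * (of_real s * of_real x))) has_integral
               complex_of_real (cesaro_const (t * x))) {0..1}"
    by (simp add: mult_ac)
  moreover have "((\<lambda>s. 1 / (1 - of_real t * (of_real s * of_real x))) has_integral
                   cesaro t (\<lambda>_. 1) (of_real x)) {0..1}"
    using cesaro_has_integral[of "\<lambda>_. 1" t "of_real x"] assms by simp
  ultimately show ?thesis
    by (rule has_integral_unique[rotated])
qed

lemma hnorm_cesaro_le_cesaro_const:
  assumes "f \<in> Hinf" "hnorm f \<le> 1" "0 \<le> t" "t < 1"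
  shows "hnorm (cesaro t f) \<le> cesaro_const t"
proof -
  have "hnorm (cesaro t f) \<le> hnorm f * cesaro_const t"
    using assms(1,3,4) by (rule hnorm_cesaro_le)
  also have "\<dots> \<le> 1 * cesaro_const t"
    using assms(2) cesaro_const_pos[OF assms(4)] by (intro mult_right_mono) auto
  finally show ?thesis
    by simp
qed

lemma cesaro_opnorm_le:
  assumes "0 \<le> t" "t < 1"
  shows "cesaro_opnorm t \<le> cesaro_const t"
  unfolding cesaro_opnorm_def
proof (rule cSUP_least)
  show "{f \<in> Hinf. hnorm f \<le> 1} \<noteq> {}"
    using Hinf_const[of 0] hnorm_const[of 0] by auto
  fix f
  assume "f \<in> {f \<in> Hinf. hnorm f \<le> 1}"
  then show "hnorm (cesaro t f) \<le> cesaro_const t"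
    using assms by (intro hnorm_cesaro_le_cesaro_const) auto
qed

lemma hnorm_cesaro_le_opnorm:
  assumes "f \<in> Hinf" "hnorm f \<le> 1" "0 \<le> t" "t < 1"
  shows "hnorm (cesaro t f) \<le> cesaro_opnorm t"
proof -
  have "bdd_above ((\<lambda>f. hnorm (cesaro t f)) ` {f \<in> Hinf. hnorm f \<le> 1})"
    using assms(3,4) by (intro bdd_aboveI2[where M = "cesaro_const t"] hnorm_cesaro_le_cesaro_const) auto
  then show ?thesis
    unfolding cesaro_opnorm_def by (rule cSUP_upper2[of _ _ f]) (use assms(1,2) in auto)
qed

lemma cesaro_const_le_opnorm:
  assumes "0 \<le> t" "t < 1"
  shows "cesaro_const t \<le> cesaro_opnorm t"
proof -
  have below: "cesaro_const (t * x) \<le> cesaro_opnorm t" if "0 \<le> x" "x < 1" for x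
  proof -
    have "0 < cesaro_const (t * x)"
      using assms that mult_left_le[of x t] by (intro cesaro_const_pos) auto
    then have "cesaro_const (t * x) = norm (cesaro t (\<lambda>_. 1) (of_real x))"
      using assms that by (simp add: cesaro_one_of_real)
    also have "\<dots> \<le> hnorm (cesaro t (\<lambda>_. 1))"
      using assms that by (intro norm_le_hnorm cesaro_Hinf Hinf_const) auto
    also have "\<dots> \<le> cesaro_opnorm t"
      using assms by (intro hnorm_cesaro_le_opnorm Hinf_const) (auto simp: hnorm_const)
    finally show ?thesis .
  qed
  show ?thesis
  proof (cases "t = 0")
    case True
    then show ?thesis
      using below[of 0] by simp
  next
    case False
    have "((\<lambda>x. - ln (1 - t * x) / (t * x)) \<longlongrightarrow> - ln (1 - t * 1) / (t * 1)) (at_left 1)"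
      using assms False by (intro tendsto_intros) auto
    moreover have near_1: "eventually (\<lambda>x. x \<in> {0<..<1}) (at_left (1::real))"
      by (rule eventually_at_left_real) simp
    then have "eventually (\<lambda>x. - ln (1 - t * x) / (t * x) = cesaro_const (t * x)) (at_left 1)"
      by (rule eventually_mono) (use False in \<open>auto simp: cesaro_const_def\<close>)
    ultimately have "((\<lambda>x. cesaro_const (t * x)) \<longlongrightarrow> cesaro_const t) (at_left 1)"
      using False by (auto simp: cesaro_const_def dest: Lim_transform_eventually)
    moreover have "eventually (\<lambda>x. cesaro_const (t * x) \<le> cesaro_opnorm t) (at_left 1)"
      using near_1 by (rule eventually_mono) (auto intro: below)
    ultimately show ?thesis
      by (rule tendsto_upperbound) simp
  qed
qed

lemma cesaro_opnorm_eq: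
  assumes "0 \<le> t" "t < 1"
  shows "cesaro_opnorm t = cesaro_const t"
  using cesaro_opnorm_le[OF assms] cesaro_const_le_opnorm[OF assms] by simp

theorem proposition2p3:
  shows "(\<forall>t::real. 0 \<le> t \<and> t < 1 \<longrightarrow>
            (\<forall>f\<in>Hinf. cesaro t f \<in> Hinf) \<and>
            (\<forall>f\<in>Hinf. \<forall>\<epsilon>>0. \<exists>\<delta>>0. \<forall>g\<in>Hinf.
               hnorm (\<lambda>z. g z - f z) < \<delta> \<longrightarrow>
               hnorm (\<lambda>z. cesaro t g z - cesaro t f z) < \<epsilon>))
       \<and> cesaro_opnorm 0 = 1
       \<and> (\<forall>t::real. 0 < t \<and> t < 1 \<longrightarrow> cesaro_opnorm t = - ln (1 - t) / t)"
proof (intro conjI allI impI ballI)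
  fix t :: real and f
  assume "0 \<le> t \<and> t < 1" "f \<in> Hinf"
  then show "cesaro t f \<in> Hinf"
    by (simp add: cesaro_Hinf)
next
  fix t \<epsilon> :: real and f
  assume "0 \<le> t \<and> t < 1" "f \<in> Hinf" "\<epsilon> > 0"
  then show "\<exists>\<delta>>0. \<forall>g\<in>Hinf. hnorm (\<lambda>z. g z - f z) < \<delta> \<longrightarrow>
               hnorm (\<lambda>z. cesaro t g z - cesaro t f z) < \<epsilon>"
    by (intro cesaro_continuous) auto
next
  show "cesaro_opnorm 0 = 1"
    by (simp add: cesaro_opnorm_eq cesaro_const_def)
next
  fix t :: real
  assume "0 < t \<and> t < 1"
  then show "cesaro_opnorm t = - ln (1 - t) / t"
    by (simp add: cesaro_opnorm_eq cesaro_const_def)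
qed

end
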